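(* Let $G=(V(G),E(G))$ be a finite connected graph with $N$ vertices, and attach to each vertex an $N$-level system $\mathbb{C}^N$. Let $H=\sum_{(i,j)\in E(G)}J_{ij}P_{ij}$ with all couplings $J_{ij}>0$. Then the ground state of $H$ is the $N$-singlet $|S^{(N)}_N\rangle$.
   Context: $P_{ij}$ is the swap operator on $(\mathbb{C}^N)^{\otimes N}$ exchanging tensor factors $i$ and $j$. Fix an orthonormal basis $\{|\alpha_k\rangle\}_{k=1}^N$ of $\mathbb{C}^N$. The $N$-singlet is $$|S^{(N)}_N\rangle=\frac{1}{\sqrt{N!}}\sum_{\pi\in S_N}\operatorname{sgn}(\pi)\,|\alpha_{\pi(1)},\dots,\alpha_{\pi(N)}\rangle,$$ the totally antisymmetric state: it satisfies $P_{ij}|S^{(N)}_N\rangle=-|S^{(N)}_N\rangle$ for all $i\ne j$. Up to a global phase it does not depend on the chosen basis, and $U^{\otimes N}|S^{(N)}_N\rangle=|S^{(N)}_N\rangle$ up to a phase for every unitary $U$ on $\mathbb{C}^N$. *)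

theory Defs
  imports Complex_Main "HOL-Combinatorics.Permutations"
begin

text \<open>Graph on the finite vertex type 'v (V(G) = UNIV, N = CARD('v)); edges are
  2-element subsets of vertices. The local space C^N has its orthonormal basis indexed
  by 'v as well, so a basis vector of (C^N)^{\<otimes>N} is a configuration c :: 'v \<Rightarrow> 'v
  (vertex i carries basis state alpha_(c i)), and a state is its coefficient function.\<close>

type_synonym 'v state = "('v \<Rightarrow> 'v) \<Rightarrow> complex"

definition is_graph :: "'v set set \<Rightarrow> bool" where
  "is_graph E \<longleftrightarrow> (\<forall>e\<in>E. card e = 2)"

definition adjacent :: "'v set set \<Rightarrow> 'v \<Rightarrow> 'v \<Rightarrow> bool" where
  "adjacent E u v \<longleftrightarrow> {u, v} \<in> E"

definition connected_graph :: "'v set set \<Rightarrow> bool" where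
  "connected_graph E \<longleftrightarrow> (\<forall>u v. (adjacent E)\<^sup>*\<^sup>* u v)"

definition swap_op :: "'v \<Rightarrow> 'v \<Rightarrow> 'v state \<Rightarrow> 'v state" where
  "swap_op i j \<psi> = (\<lambda>c. \<psi> (c \<circ> transpose i j))"

definition edge_swap :: "'v set \<Rightarrow> 'v state \<Rightarrow> 'v state" where
  "edge_swap e = (let p = (SOME p. e = {fst p, snd p} \<and> fst p \<noteq> snd p)
                  in swap_op (fst p) (snd p))"

definition hamiltonian :: "'v set set \<Rightarrow> ('v set \<Rightarrow> real) \<Rightarrow> 'v state \<Rightarrow> 'v state" where
  "hamiltonian E J \<psi> = (\<lambda>c. \<Sum>e\<in>E. complex_of_real (J e) * edge_swap e \<psi> c)"

definition singlet :: "('v::finite) state" where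
  "singlet = (\<lambda>c. if bij c then complex_of_real (real_of_int (sign c) / sqrt (fact (card (UNIV::'v set)))) else 0)"

end

theory Submission
  imports Defs
begin

text \<open>Each swap operator is a unitary involution, so its expectation in a state \<psi> is real and
  at least -|\<psi>|^2, with equality exactly when \<psi> is odd under the swap. Hence every
  eigenvalue of H is at least -\<Sum>J_e, the singlet attains this bound, and a state attaining
  it is odd under every edge swap. Along a path u - v - w the conjugation
  (u v)(v w)(u v) = (u w) propagates oddness, so by connectedness the state is odd under
  every transposition, i.e. totally antisymmetric, and thus a multiple of the singlet.\<close>

definition braket :: "('x \<Rightarrow> complex) \<Rightarrow> ('x \<Rightarrow> complex) \<Rightarrow> complex" where
  "braket \<phi> \<psi> = (\<Sum>x\<in>UNIV. cnj (\<phi> x) * \<psi> x)"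

definition sqnorm :: "('x \<Rightarrow> complex) \<Rightarrow> real" where
  "sqnorm \<psi> = (\<Sum>x\<in>UNIV. (cmod (\<psi> x))\<^sup>2)"

lemma braket_scale_right: "braket \<phi> (\<lambda>x. a * \<psi> x) = a * braket \<phi> \<psi>"
  by (simp add: braket_def sum_distrib_left mult_ac)

lemma braket_self: "braket \<psi> \<psi> = complex_of_real (sqnorm \<psi>)"
  by (simp add: braket_def sqnorm_def mult.commute[of "cnj _"] flip: complex_norm_square)

lemma sqnorm_nonneg: "0 \<le> sqnorm \<psi>"
  by (simp add: sqnorm_def sum_nonneg)

lemma sqnorm_eq_0_iff:
  fixes \<psi> :: "'x::finite \<Rightarrow> complex"
  shows "sqnorm \<psi> = 0 \<longleftrightarrow> \<psi> = (\<lambda>_. 0)"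
  by (simp add: sqnorm_def sum_nonneg_eq_0_iff fun_eq_iff)

lemma sqnorm_pos:
  fixes \<psi> :: "'x::finite \<Rightarrow> complex"
  shows "\<psi> \<noteq> (\<lambda>_. 0) \<Longrightarrow> 0 < sqnorm \<psi>"
  using sqnorm_nonneg[of \<psi>] sqnorm_eq_0_iff[of \<psi>] by linarith

lemma sum_comp_involution:
  assumes "\<And>x. \<sigma> (\<sigma> x) = x"
  shows "(\<Sum>x\<in>UNIV. g (\<sigma> x)) = (\<Sum>x\<in>UNIV. g x)"
  by (rule sum.reindex_bij_witness[of _ \<sigma> \<sigma>]) (auto simp: assms)

lemma Im_braket_comp_involution:
  assumes "\<And>x. \<sigma> (\<sigma> x) = x"
  shows "Im (braket \<psi> (\<lambda>x. \<psi> (\<sigma> x))) = 0"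
proof -
  have "cnj (braket \<psi> (\<lambda>x. \<psi> (\<sigma> x))) = (\<Sum>x\<in>UNIV. \<psi> x * cnj (\<psi> (\<sigma> x)))"
    by (simp add: braket_def)
  also have "\<dots> = (\<Sum>x\<in>UNIV. \<psi> (\<sigma> x) * cnj (\<psi> (\<sigma> (\<sigma> x))))"
    using sum_comp_involution[OF assms, of "\<lambda>x. \<psi> x * cnj (\<psi> (\<sigma> x))"] by simp
  also have "\<dots> = braket \<psi> (\<lambda>x. \<psi> (\<sigma> x))"
    by (simp add: braket_def assms mult.commute)
  finally show ?thesis
    by (simp add: complex_eq_iff)
qed

lemma sqnorm_add_comp_involution:
  assumes "\<And>x. \<sigma> (\<sigma> x) = x"
  shows "sqnorm (\<lambda>x. \<psi> x + \<psi> (\<sigma> x)) = 2 * sqnorm \<psi> + 2 * Re (braket \<psi> (\<lambda>x. \<psi> (\<sigma> x)))"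
proof -
  have "(cmod (a + b))\<^sup>2 = (cmod a)\<^sup>2 + (cmod b)\<^sup>2 + 2 * Re (cnj a * b)" for a b :: complex
    by (simp add: cmod_power2 power2_sum algebra_simps)
  then have "sqnorm (\<lambda>x. \<psi> x + \<psi> (\<sigma> x))
      = sqnorm \<psi> + (\<Sum>x\<in>UNIV. (cmod (\<psi> (\<sigma> x)))\<^sup>2) + 2 * Re (braket \<psi> (\<lambda>x. \<psi> (\<sigma> x)))"
    by (simp add: sqnorm_def braket_def sum.distrib sum_distrib_left Re_sum)
  also have "(\<Sum>x\<in>UNIV. (cmod (\<psi> (\<sigma> x)))\<^sup>2) = sqnorm \<psi>"
    unfolding sqnorm_def by (rule sum_comp_involution[OF assms])
  finally show ?thesis by simp
qed

lemma Re_braket_comp_involution_ge: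
  assumes "\<And>x. \<sigma> (\<sigma> x) = x"
  shows "- sqnorm \<psi> \<le> Re (braket \<psi> (\<lambda>x. \<psi> (\<sigma> x)))"
  using sqnorm_add_comp_involution[OF assms, of \<psi>] sqnorm_nonneg[of "\<lambda>x. \<psi> x + \<psi> (\<sigma> x)"]
  by linarith

lemma Re_braket_comp_involution_eq_iff:
  fixes \<psi> :: "'x::finite \<Rightarrow> complex"
  assumes "\<And>x. \<sigma> (\<sigma> x) = x"
  shows "Re (braket \<psi> (\<lambda>x. \<psi> (\<sigma> x))) = - sqnorm \<psi> \<longleftrightarrow> (\<forall>x. \<psi> (\<sigma> x) = - \<psi> x)"
proof -
  have "Re (braket \<psi> (\<lambda>x. \<psi> (\<sigma> x))) = - sqnorm \<psi> \<longleftrightarrow> sqnorm (\<lambda>x. \<psi> x + \<psi> (\<sigma> x)) = 0"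
    using sqnorm_add_comp_involution[OF assms, of \<psi>] by linarith
  also have "\<dots> \<longleftrightarrow> (\<forall>x. \<psi> (\<sigma> x) = - \<psi> x)"
    by (auto simp: sqnorm_eq_0_iff fun_eq_iff add_eq_0_iff)
  finally show ?thesis .
qed

lemma transpose_right_involution: "(c \<circ> transpose i j) \<circ> transpose i j = c"
  by (simp add: comp_assoc)

lemma Im_braket_swap_op: "Im (braket \<psi> (swap_op i j \<psi>)) = 0"
  unfolding swap_op_def by (rule Im_braket_comp_involution) (rule transpose_right_involution)

lemma Re_braket_swap_op_ge: "- sqnorm \<psi> \<le> Re (braket \<psi> (swap_op i j \<psi>))"
  unfolding swap_op_def by (rule Re_braket_comp_involution_ge) (rule transpose_right_involution)

lemma Re_braket_swap_op_eq_iff: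
  fixes \<psi> :: "('v::finite) state"
  shows "Re (braket \<psi> (swap_op i j \<psi>)) = - sqnorm \<psi> \<longleftrightarrow> swap_op i j \<psi> = (\<lambda>c. - \<psi> c)"
  unfolding swap_op_def fun_eq_iff
  by (rule Re_braket_comp_involution_eq_iff) (rule transpose_right_involution)

lemma edge_swap_obtains_swap_op:
  obtains i j where "edge_swap e = swap_op i j"
  using that by (simp add: edge_swap_def Let_def)

lemma edge_swap_doubleton:
  assumes "i \<noteq> j"
  shows "edge_swap {i, j} = swap_op i j"
proof -
  define p where "p = (SOME p. {i, j} = {fst p, snd p} \<and> fst p \<noteq> snd p)"
  have "{i, j} = {fst p, snd p} \<and> fst p \<noteq> snd p"
    unfolding p_def by (rule someI[of _ "(i, j)"]) (simp add: assms)
  then have "p = (i, j) \<or> p = (j, i)"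
    by (auto simp: doubleton_eq_iff prod_eq_iff)
  then show ?thesis
    by (auto simp: edge_swap_def p_def[symmetric] swap_op_def transpose_commute)
qed

lemma Im_braket_edge_swap: "Im (braket \<psi> (edge_swap e \<psi>)) = 0"
  by (metis edge_swap_obtains_swap_op Im_braket_swap_op)

lemma Re_braket_edge_swap_add_sqnorm_nonneg: "0 \<le> Re (braket \<psi> (edge_swap e \<psi>)) + sqnorm \<psi>"
proof -
  obtain i j where "edge_swap e = swap_op i j" by (rule edge_swap_obtains_swap_op)
  then show ?thesis
    using Re_braket_swap_op_ge[of \<psi> i j] by simp
qed

lemma Re_braket_edge_swap_eq_iff:
  fixes \<psi> :: "('v::finite) state"
  shows "Re (braket \<psi> (edge_swap e \<psi>)) = - sqnorm \<psi> \<longleftrightarrow> edge_swap e \<psi> = (\<lambda>c. - \<psi> c)"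
  by (metis edge_swap_obtains_swap_op Re_braket_swap_op_eq_iff)

definition hamiltonian_form :: "'v set set \<Rightarrow> ('v set \<Rightarrow> real) \<Rightarrow> 'v state \<Rightarrow> real" where
  "hamiltonian_form E J \<psi> = (\<Sum>e\<in>E. J e * Re (braket \<psi> (edge_swap e \<psi>)))"

lemma braket_hamiltonian:
  "braket \<psi> (hamiltonian E J \<psi>) = complex_of_real (hamiltonian_form E J \<psi>)"
proof -
  have "braket \<psi> (hamiltonian E J \<psi>) = (\<Sum>e\<in>E. complex_of_real (J e) * braket \<psi> (edge_swap e \<psi>))"
    by (simp add: braket_def hamiltonian_def sum_distrib_left sum_distrib_right mult_ac
        sum.swap[of _ E])
  also have "\<dots> = (\<Sum>e\<in>E. complex_of_real (J e * Re (braket \<psi> (edge_swap e \<psi>))))"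
    by (intro sum.cong refl) (simp add: complex_eq_iff Im_braket_edge_swap)
  finally show ?thesis
    by (simp add: hamiltonian_form_def)
qed

lemma hamiltonian_form_shift:
  "hamiltonian_form E J \<psi> + (\<Sum>e\<in>E. J e) * sqnorm \<psi>
     = (\<Sum>e\<in>E. J e * (Re (braket \<psi> (edge_swap e \<psi>)) + sqnorm \<psi>))"
  by (simp add: hamiltonian_form_def distrib_left sum.distrib sum_distrib_right)

lemma hamiltonian_form_ge:
  assumes "\<And>e. e \<in> E \<Longrightarrow> 0 \<le> J e"
  shows "- (\<Sum>e\<in>E. J e) * sqnorm \<psi> \<le> hamiltonian_form E J \<psi>"
proof -
  have "0 \<le> J e * (Re (braket \<psi> (edge_swap e \<psi>)) + sqnorm \<psi>)" if "e \<in> E" for e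
    using mult_nonneg_nonneg[OF assms[OF that] Re_braket_edge_swap_add_sqnorm_nonneg] .
  then have "0 \<le> (\<Sum>e\<in>E. J e * (Re (braket \<psi> (edge_swap e \<psi>)) + sqnorm \<psi>))"
    by (rule sum_nonneg)
  then show ?thesis
    using hamiltonian_form_shift[of E J \<psi>] by linarith
qed

lemma hamiltonian_form_eq_min_imp_edge_swap:
  fixes E :: "('v::finite) set set"
  assumes "\<And>e. e \<in> E \<Longrightarrow> 0 < J e"
    and "hamiltonian_form E J \<psi> = - (\<Sum>e\<in>E. J e) * sqnorm \<psi>"
    and "e \<in> E"
  shows "edge_swap e \<psi> = (\<lambda>c. - \<psi> c)"
proof -
  have nonneg: "0 \<le> J e * (Re (braket \<psi> (edge_swap e \<psi>)) + sqnorm \<psi>)" if "e \<in> E" for e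
    using mult_nonneg_nonneg[OF less_imp_le[OF assms(1)[OF that]] Re_braket_edge_swap_add_sqnorm_nonneg] .
  have "(\<Sum>e\<in>E. J e * (Re (braket \<psi> (edge_swap e \<psi>)) + sqnorm \<psi>)) = 0"
    using hamiltonian_form_shift[of E J \<psi>] assms(2) by linarith
  then have "\<forall>e\<in>E. J e * (Re (braket \<psi> (edge_swap e \<psi>)) + sqnorm \<psi>) = 0"
    by (subst (asm) sum_nonneg_eq_0_iff) (simp_all add: nonneg)
  then have "J e * (Re (braket \<psi> (edge_swap e \<psi>)) + sqnorm \<psi>) = 0"
    using assms(3) by (rule bspec)
  then have "Re (braket \<psi> (edge_swap e \<psi>)) = - sqnorm \<psi>"
    using assms(1)[OF assms(3)] by simp
  then show ?thesis
    by (rule Re_braket_edge_swap_eq_iff[THEN iffD1])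
qed

lemma hamiltonian_eigenvalue:
  fixes \<psi> :: "('v::finite) state"
  assumes "\<psi> \<noteq> (\<lambda>_. 0)" and "hamiltonian E J \<psi> = (\<lambda>c. \<mu> * \<psi> c)"
  shows "\<mu> = complex_of_real (hamiltonian_form E J \<psi> / sqnorm \<psi>)"
proof -
  have "\<mu> * complex_of_real (sqnorm \<psi>) = complex_of_real (hamiltonian_form E J \<psi>)"
    using braket_hamiltonian[of \<psi> E J] by (simp add: assms(2) braket_scale_right braket_self)
  then show ?thesis
    using sqnorm_pos[OF assms(1)] by (simp add: field_simps)
qed

lemma hamiltonian_eigenvalue_ge:
  fixes \<psi> :: "('v::finite) state"
  assumes "\<And>e. e \<in> E \<Longrightarrow> 0 \<le> J e"
    and "\<psi> \<noteq> (\<lambda>_. 0)" and "hamiltonian E J \<psi> = (\<lambda>c. \<mu> * \<psi> c)"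
  shows "\<exists>r. \<mu> = complex_of_real r \<and> - (\<Sum>e\<in>E. J e) \<le> r"
proof -
  have "- (\<Sum>e\<in>E. J e) \<le> hamiltonian_form E J \<psi> / sqnorm \<psi>"
    using hamiltonian_form_ge[OF assms(1)] sqnorm_pos[OF assms(2)] by (simp add: field_simps)
  then show ?thesis
    using hamiltonian_eigenvalue[OF assms(2,3)] by blast
qed

lemma hamiltonian_form_real_eigenvector:
  assumes "hamiltonian E J \<psi> = (\<lambda>c. complex_of_real r * \<psi> c)"
  shows "hamiltonian_form E J \<psi> = r * sqnorm \<psi>"
proof -
  have "complex_of_real (hamiltonian_form E J \<psi>) = complex_of_real r * complex_of_real (sqnorm \<psi>)"
    using braket_hamiltonian[of \<psi> E J] by (simp only: assms braket_scale_right braket_self)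
  then show ?thesis
    by (simp only: of_real_mult[symmetric] of_real_eq_iff)
qed

lemma hamiltonian_ground_state_edge_antisymmetric:
  fixes E :: "('v::finite) set set"
  assumes "\<And>e. e \<in> E \<Longrightarrow> 0 < J e"
    and "hamiltonian E J \<psi> = (\<lambda>c. complex_of_real (- (\<Sum>e\<in>E. J e)) * \<psi> c)"
    and "e \<in> E"
  shows "edge_swap e \<psi> = (\<lambda>c. - \<psi> c)"
  using assms(1) hamiltonian_form_real_eigenvector[OF assms(2)] assms(3)
  by (rule hamiltonian_form_eq_min_imp_edge_swap)

lemma hamiltonian_edge_antisymmetric:
  assumes "\<And>e. e \<in> E \<Longrightarrow> edge_swap e \<psi> = (\<lambda>c. - \<psi> c)"
  shows "hamiltonian E J \<psi> = (\<lambda>c. complex_of_real (- (\<Sum>e\<in>E. J e)) * \<psi> c)"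
  by (simp add: hamiltonian_def assms sum_distrib_right sum_negf)

lemma singlet_swap_op:
  assumes "i \<noteq> j"
  shows "swap_op i j (singlet :: ('v::finite) state) = (\<lambda>c. - singlet c)"
proof
  fix c :: "'v \<Rightarrow> 'v"
  have bij_iff: "bij (c \<circ> transpose i j) \<longleftrightarrow> bij c"
    using bij_betw_comp_iff[of "transpose i j" UNIV UNIV c UNIV] by simp
  have "sign (c \<circ> transpose i j) = - sign c" if "bij c"
    using that assms by (simp add: sign_compose permutation sign_swap_id)
  then show "swap_op i j singlet c = - singlet c"
    using bij_iff by (auto simp: swap_op_def singlet_def)
qed

lemma swap_antisymmetric_comp_permutes:
  fixes \<psi> :: "('v::finite) state"
  assumes odd: "\<And>i j. i \<noteq> j \<Longrightarrow> swap_op i j \<psi> = (\<lambda>c. - \<psi> c)"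
    and "p permutes UNIV"
  shows "\<psi> (c \<circ> p) = of_int (sign p) * \<psi> c"
  using assms(2) finite_UNIV
proof (induction arbitrary: c rule: permutes_induct)
  case id
  then show ?case by simp
next
  case (swap a b p)
  have "\<psi> (c \<circ> (transpose a b \<circ> p)) = \<psi> ((c \<circ> transpose a b) \<circ> p)"
    by (simp add: comp_assoc)
  also have "\<dots> = of_int (sign p) * \<psi> (c \<circ> transpose a b)"
    by (rule swap.IH)
  also have "\<dots> = - of_int (sign p) * \<psi> c"
    using fun_cong[OF odd[OF swap.hyps(3)], of c] by (simp add: swap_op_def)
  also have "\<dots> = of_int (sign (transpose a b \<circ> p)) * \<psi> c"
    using swap.hyps(3,4) by (simp add: sign_compose permutation permutes_bij sign_swap_id)
  finally show ?case .
qed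

lemma swap_antisymmetric_not_inj:
  assumes "\<And>i j. i \<noteq> j \<Longrightarrow> swap_op i j \<psi> = (\<lambda>c. - \<psi> c)"
    and "\<not> inj c"
  shows "\<psi> c = 0"
proof -
  obtain i j where "i \<noteq> j" "c i = c j"
    using assms(2) by (auto simp: inj_def)
  then have "c \<circ> transpose i j = c" and "swap_op i j \<psi> c = - \<psi> c"
    using assms(1) by (auto simp: fun_eq_iff transpose_def)
  then show ?thesis
    by (simp add: swap_op_def)
qed

lemma swap_antisymmetric_eq_singlet_multiple:
  fixes \<psi> :: "('v::finite) state"
  assumes "\<And>i j. i \<noteq> j \<Longrightarrow> swap_op i j \<psi> = (\<lambda>c. - \<psi> c)"
  shows "\<exists>a. \<psi> = (\<lambda>c. a * singlet c)"
proof -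
  define a where "a = \<psi> id * complex_of_real (sqrt (fact (card (UNIV :: 'v set))))"
  have "\<psi> c = a * singlet c" for c
  proof (cases "bij c")
    case True
    then have "c permutes UNIV"
      by (auto intro: bij_imp_permutes)
    then have "\<psi> c = of_int (sign c) * \<psi> id"
      using swap_antisymmetric_comp_permutes[OF assms, of c id] by simp
    then show ?thesis
      using True by (simp add: a_def singlet_def)
  next
    case False
    then show ?thesis
      using swap_antisymmetric_not_inj[OF assms] finite_UNIV_inj_surj[of c]
      by (auto simp: singlet_def bij_def)
  qed
  then show ?thesis by blast
qed

lemma swap_antisymmetric_trans:
  assumes "swap_op u v \<psi> = (\<lambda>c. - \<psi> c)" and "swap_op v w \<psi> = (\<lambda>c. - \<psi> c)"
    and "u \<noteq> w" and "v \<noteq> w"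
  shows "swap_op u w \<psi> = (\<lambda>c. - \<psi> c)"
proof
  fix c
  have "transpose u w = transpose u v \<circ> transpose v w \<circ> transpose u v"
    using transpose_comp_triple[OF assms(3,4)] by simp
  then have "swap_op u w \<psi> c = \<psi> (((c \<circ> transpose u v) \<circ> transpose v w) \<circ> transpose u v)"
    by (simp add: swap_op_def comp_assoc)
  also have "\<dots> = - \<psi> c"
    using assms(1,2) by (simp add: swap_op_def fun_eq_iff)
  finally show "swap_op u w \<psi> c = - \<psi> c" .
qed

lemma swap_antisymmetric_of_connected:
  assumes "is_graph E" and "connected_graph E"
    and edge: "\<And>e. e \<in> E \<Longrightarrow> edge_swap e \<psi> = (\<lambda>c. - \<psi> c)"
  shows "i \<noteq> j \<Longrightarrow> swap_op i j \<psi> = (\<lambda>c. - \<psi> c)"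
proof -
  have adj: "v \<noteq> w \<and> swap_op v w \<psi> = (\<lambda>c. - \<psi> c)" if "adjacent E v w" for v w
  proof -
    have "{v, w} \<in> E" using that by (simp add: adjacent_def)
    moreover have "v \<noteq> w"
      using assms(1) calculation by (auto simp: is_graph_def)
    ultimately show ?thesis
      using edge[of "{v, w}"] edge_swap_doubleton[of v w] by simp
  qed
  have "(adjacent E)\<^sup>*\<^sup>* i j"
    using assms(2) by (simp add: connected_graph_def)
  then have "i = j \<or> swap_op i j \<psi> = (\<lambda>c. - \<psi> c)"
  proof (induction rule: rtranclp_induct)
    case (step v w)
    then show ?case
      using adj[OF step.hyps(2)] swap_antisymmetric_trans[of i v \<psi> w] by auto
  qed simp
  then show "i \<noteq> j \<Longrightarrow> swap_op i j \<psi> = (\<lambda>c. - \<psi> c)" by simp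
qed

theorem theorem1:
  fixes E :: "('v::finite) set set" and J :: "'v set \<Rightarrow> real"
  assumes "is_graph E"
    and "connected_graph E"
    and "\<And>e. e \<in> E \<Longrightarrow> J e > 0"
  shows "\<exists>E0::real.
           hamiltonian E J singlet = (\<lambda>c. complex_of_real E0 * singlet c)
         \<and> (\<forall>(\<mu>::complex) (\<psi>::'v state). \<psi> \<noteq> (\<lambda>_. 0) \<and> hamiltonian E J \<psi> = (\<lambda>c. \<mu> * \<psi> c) \<longrightarrow>
               (\<exists>r::real. \<mu> = complex_of_real r \<and> E0 \<le> r)
             \<and> (\<mu> = complex_of_real E0 \<longrightarrow> (\<exists>a::complex. \<psi> = (\<lambda>c. a * singlet c))))"
proof (rule exI, intro conjI allI impI)
  let ?E0 = "- (\<Sum>e\<in>E. J e)"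
  have "edge_swap e singlet = (\<lambda>c. - singlet c)" if "e \<in> E" for e
  proof -
    have "card e = 2"
      using assms(1) that by (simp add: is_graph_def)
    then obtain i j where "e = {i, j}" and "i \<noteq> j"
      by (auto simp: card_2_iff)
    then show ?thesis
      by (simp add: edge_swap_doubleton singlet_swap_op)
  qed
  then show "hamiltonian E J singlet = (\<lambda>c. complex_of_real ?E0 * singlet c)"
    by (rule hamiltonian_edge_antisymmetric)
  fix \<mu> and \<psi> :: "'v state"
  assume eigen: "\<psi> \<noteq> (\<lambda>_. 0) \<and> hamiltonian E J \<psi> = (\<lambda>c. \<mu> * \<psi> c)"
  then show "\<exists>r. \<mu> = complex_of_real r \<and> ?E0 \<le> r"
    using assms(3) by (intro hamiltonian_eigenvalue_ge) (auto simp: less_imp_le)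
  assume "\<mu> = complex_of_real ?E0"
  then have "edge_swap e \<psi> = (\<lambda>c. - \<psi> c)" if "e \<in> E" for e
    using hamiltonian_ground_state_edge_antisymmetric[OF assms(3) _ that] eigen by simp
  then have "swap_op i j \<psi> = (\<lambda>c. - \<psi> c)" if "i \<noteq> j" for i j
    using swap_antisymmetric_of_connected[OF assms(1,2)] that by blast
  then show "\<exists>a. \<psi> = (\<lambda>c. a * singlet c)"
    by (rule swap_antisymmetric_eq_singlet_multiple)
qed

end
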